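(* Let $n\ge 2$, $\rho^*\ge0$, $s>0$, and $k_\rho,k_z,k_\phi>0$. Consider the closed-loop system, for $i=1,\dots,n$, $$\dot\rho_i=k_\rho(\rho^*-\rho_i),\qquad \dot\phi_i=\frac{\Delta_i}{s}+k_\phi(\bar\phi_i-\phi_i),\qquad \dot z_i=-k_z z_i,$$ with $\bar\phi_i$ and $\Delta_i$ as defined in the context. Then for every initial condition, as $t\to\infty$, exponentially: $\rho_i\to\rho^*$, $\phi_i-\bar\phi_i\to0$, $\dot\phi_i\to \frac{2\pi}{ns}$, and $z_i\to0$, for all $i$.
   Context: There are $n$ robots with cylindrical coordinates $(\rho_i,\phi_i,z_i)$ relative to a target frame (radius, phase, height), whose dynamics after a feedback transformation are $\dot\rho_i,\dot\phi_i,\dot z_i$ equal to free inputs. The phases $\phi_i(t)$ are treated as real-valued (not reduced modulo $2\pi$), robots indexed in counterclockwise phase order at the initial time. Phase averages: $\bar\phi_1=\frac{\phi_2+\phi_n-2\pi}{2}$, $\bar\phi_i=\frac{\phi_{i+1}+\phi_{i-1}}{2}$ for $2\le i\le n-1$, $\bar\phi_n=\frac{\phi_1+2\pi+\phi_{n-1}}{2}$. Phase half-differences: $\Delta_1=\frac{\phi_2-\phi_n+2\pi}{2}$, $\Delta_i=\frac{\phi_{i+1}-\phi_{i-1}}{2}$ for $2\le i\le n-1$, $\Delta_n=\frac{\phi_1+2\pi-\phi_{n-1}}{2}$. *)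

theory Defs
  imports "HOL-Analysis.Analysis"
begin

text \<open>Phase snapshot: ph :: nat => real, robots indexed 1..n.\<close>

definition phase_avg :: "nat \<Rightarrow> (nat \<Rightarrow> real) \<Rightarrow> nat \<Rightarrow> real" where
  "phase_avg n ph i =
     (if i = 1 then (ph 2 + ph n - 2 * pi) / 2
      else if i = n then (ph 1 + 2 * pi + ph (n - 1)) / 2
      else (ph (i + 1) + ph (i - 1)) / 2)"

definition phase_halfdiff :: "nat \<Rightarrow> (nat \<Rightarrow> real) \<Rightarrow> nat \<Rightarrow> real" where
  "phase_halfdiff n ph i =
     (if i = 1 then (ph 2 - ph n + 2 * pi) / 2
      else if i = n then (ph 1 + 2 * pi - ph (n - 1)) / 2
      else (ph (i + 1) - ph (i - 1)) / 2)"

definition exp_conv :: "(real \<Rightarrow> real) \<Rightarrow> real \<Rightarrow> bool" where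
  "exp_conv f L \<longleftrightarrow> (\<exists>C r. r > 0 \<and> (\<forall>t\<ge>0. \<bar>f t - L\<bar> \<le> C * exp (- r * t)))"

end

theory Submission imports Defs begin

text \<open>
  Work with the cyclic gaps \<open>D\<^sub>j = \<phi>\<^sub>j\<^sub>+\<^sub>1 - \<phi>\<^sub>j\<close> (the last one wrapping around by \<open>2\<pi>\<close>),
  which always sum to \<open>2\<pi>\<close>.  Each phase velocity is a fixed linear combination of the two
  adjacent gaps, so the gaps obey a linear consensus system.  Along it the energy
  \<open>V = \<Sum>\<^sub>j (D\<^sub>j - 2\<pi>/n)\<^sup>2\<close> satisfies \<open>V' = -k\<^sub>\<phi> \<Sum>\<^sub>j (D\<^sub>j\<^sub>+\<^sub>1 - D\<^sub>j)\<^sup>2\<close>, and a discrete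
  Poincare inequality for the zero-mean sequence \<open>D\<^sub>j - 2\<pi>/n\<close> turns this into
  \<open>V' \<le> -(k\<^sub>\<phi>/n\<^sup>2) V\<close>.  So every gap tends to \<open>2\<pi>/n\<close> exponentially, and with the gaps the
  deviations from the phase averages and the phase velocities.  Radius and height obey decoupled
  stable linear equations.
\<close>

lemma DERIV_nonpos_imp_decreasing_from_0:
  fixes g g' :: "real \<Rightarrow> real"
  assumes deriv: "\<And>t. t \<ge> 0 \<Longrightarrow> (g has_real_derivative g' t) (at t within {0..})"
    and nonpos: "\<And>t. t \<ge> 0 \<Longrightarrow> g' t \<le> 0" and t: "t \<ge> 0"
  shows "g t \<le> g 0"
proof (rule DERIV_nonpos_imp_decreasing_open[OF t])
  fix x :: real assume x: "0 < x" "x < t"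
  then have "at x within {0..} = at x" by (intro at_within_interior) auto
  then show "\<exists>y. DERIV g x :> y \<and> y \<le> 0" using deriv[of x] nonpos[of x] x by auto
next
  have "continuous_on {0..} g"
    using deriv by (auto simp: continuous_on_eq_continuous_within intro!: DERIV_continuous)
  then show "continuous_on {0..t} g" by (rule continuous_on_subset) auto
qed

lemma DERIV_le_neg_mult_imp_exp_bound:
  fixes f f' :: "real \<Rightarrow> real" and a :: real
  assumes deriv: "\<And>t. t \<ge> 0 \<Longrightarrow> (f has_real_derivative f' t) (at t within {0..})"
    and le: "\<And>t. t \<ge> 0 \<Longrightarrow> f' t \<le> - a * f t" and t: "t \<ge> 0"
  shows "f t \<le> f 0 * exp (- a * t)"
proof -
  have "(\<lambda>t. f t * exp (a * t)) t \<le> (\<lambda>t. f t * exp (a * t)) 0"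
  proof (rule DERIV_nonpos_imp_decreasing_from_0[OF _ _ t])
    fix t :: real assume "t \<ge> 0"
    show "((\<lambda>t. f t * exp (a * t)) has_real_derivative (f' t + a * f t) * exp (a * t))
            (at t within {0..})"
      by (auto intro!: derivative_eq_intros deriv[OF \<open>t \<ge> 0\<close>] simp: algebra_simps)
    show "(f' t + a * f t) * exp (a * t) \<le> 0"
      using le[OF \<open>t \<ge> 0\<close>] by (simp add: mult_nonpos_nonneg)
  qed
  then have "f t * exp (a * t) * exp (- a * t) \<le> f 0 * exp (- a * t)"
    by (simp add: mult_right_mono)
  then show ?thesis by (simp add: mult.assoc flip: exp_add)
qed

lemma exp_conv_if_square_bound:
  assumes r: "r > 0" and bound: "\<And>t. t \<ge> 0 \<Longrightarrow> (f t - L)\<^sup>2 \<le> C * exp (- r * t)"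
  shows "exp_conv f L"
  unfolding exp_conv_def
proof (intro exI conjI allI impI)
  show "r / 2 > 0" using r by simp
  fix t :: real assume "t \<ge> 0"
  have sqrt_exp: "sqrt (exp (- r * t)) = exp (- (r / 2) * t)"
    by (rule real_sqrt_unique) (auto simp: power2_eq_square simp flip: exp_add)
  have "\<bar>f t - L\<bar> = sqrt ((f t - L)\<^sup>2)" by simp
  also have "\<dots> \<le> sqrt (C * exp (- r * t))" by (rule real_sqrt_le_mono[OF bound[OF \<open>t \<ge> 0\<close>]])
  also have "\<dots> = sqrt C * exp (- (r / 2) * t)" by (simp only: real_sqrt_mult sqrt_exp)
  finally show "\<bar>f t - L\<bar> \<le> sqrt C * exp (- (r / 2) * t)" .
qed

lemma exp_conv_linear_ode:
  fixes w :: "real \<Rightarrow> real" and k L :: real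
  assumes deriv: "\<And>t. t \<ge> 0 \<Longrightarrow> (w has_real_derivative - k * (w t - L)) (at t within {0..})"
    and k: "k > 0"
  shows "exp_conv w L"
proof (rule exp_conv_if_square_bound)
  show "2 * k > 0" using k by simp
  fix t :: real assume "t \<ge> 0"
  show "(w t - L)\<^sup>2 \<le> (w 0 - L)\<^sup>2 * exp (- (2 * k) * t)"
  proof (rule DERIV_le_neg_mult_imp_exp_bound[OF _ _ \<open>t \<ge> 0\<close>])
    fix t :: real assume "t \<ge> 0"
    show "((\<lambda>t. (w t - L)\<^sup>2) has_real_derivative 2 * (w t - L) * (- k * (w t - L)))
            (at t within {0..})"
      by (auto intro!: derivative_eq_intros deriv[OF \<open>t \<ge> 0\<close>])
  qed (simp add: power2_eq_square algebra_simps)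
qed

lemma exp_conv_bound_nonneg:
  fixes f :: "real \<Rightarrow> real"
  assumes "\<forall>t\<ge>0. \<bar>f t - L\<bar> \<le> C * exp (- r * t)"
  shows "C \<ge> 0"
proof -
  have "\<bar>f 0 - L\<bar> \<le> C * exp (- r * 0)" using assms by blast
  then show ?thesis by simp
qed

lemma exp_conv_lincomb:
  assumes "exp_conv f L" and "exp_conv g M"
  shows "exp_conv (\<lambda>t. a * f t + b * g t) (a * L + b * M)"
proof -
  obtain C1 r1 where r1: "r1 > 0" and f: "\<forall>t\<ge>0. \<bar>f t - L\<bar> \<le> C1 * exp (- r1 * t)"
    using assms(1) unfolding exp_conv_def by blast
  obtain C2 r2 where r2: "r2 > 0" and g: "\<forall>t\<ge>0. \<bar>g t - M\<bar> \<le> C2 * exp (- r2 * t)"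
    using assms(2) unfolding exp_conv_def by blast
  define r where "r = min r1 r2"
  have bound: "\<bar>a * f t + b * g t - (a * L + b * M)\<bar>
      \<le> (\<bar>a\<bar> * C1 + \<bar>b\<bar> * C2) * exp (- r * t)" if t: "t \<ge> 0" for t
  proof -
    have "exp (- r1 * t) \<le> exp (- r * t)" "exp (- r2 * t) \<le> exp (- r * t)"
      using t by (auto simp: r_def intro: mult_right_mono)
    then have "C1 * exp (- r1 * t) \<le> C1 * exp (- r * t)" "C2 * exp (- r2 * t) \<le> C2 * exp (- r * t)"
      using exp_conv_bound_nonneg[OF f] exp_conv_bound_nonneg[OF g] by (auto intro: mult_left_mono)
    then have "\<bar>f t - L\<bar> \<le> C1 * exp (- r * t)" "\<bar>g t - M\<bar> \<le> C2 * exp (- r * t)"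
      using f g t by force+
    then have "\<bar>a\<bar> * \<bar>f t - L\<bar> + \<bar>b\<bar> * \<bar>g t - M\<bar> \<le> \<bar>a\<bar> * (C1 * exp (- r * t)) + \<bar>b\<bar> * (C2 * exp (- r * t))"
      by (intro add_mono mult_left_mono) auto
    moreover have "a * f t + b * g t - (a * L + b * M) = a * (f t - L) + b * (g t - M)"
      by (simp add: algebra_simps)
    then have "\<bar>a * f t + b * g t - (a * L + b * M)\<bar> \<le> \<bar>a\<bar> * \<bar>f t - L\<bar> + \<bar>b\<bar> * \<bar>g t - M\<bar>"
      using abs_triangle_ineq[of "a * (f t - L)" "b * (g t - M)"] by (simp add: abs_mult)
    ultimately show ?thesis by (simp add: algebra_simps)
  qed
  show ?thesis unfolding exp_conv_def
    using r1 r2 bound by (intro exI[of _ "\<bar>a\<bar> * C1 + \<bar>b\<bar> * C2"] exI[of _ r]) (auto simp: r_def)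
qed

lemma periodic_mod:
  fixes f :: "nat \<Rightarrow> 'a"
  assumes "n > 0" and periodic: "\<And>j. f (j + n) = f j"
  shows "f j = f (j mod n)"
proof (induction j rule: less_induct)
  case (less j)
  show ?case
  proof (cases "j < n")
    case False
    then have "f j = f (j - n)" using periodic[of "j - n"] by simp
    also have "\<dots> = f ((j - n) mod n)" using less assms False by simp
    also have "(j - n) mod n = j mod n" using False by (simp add: le_mod_geq)
    finally show ?thesis .
  qed simp
qed

lemma discrete_poincare_inequality:
  fixes e :: "nat \<Rightarrow> real"
  assumes n: "n > 0" and mean_zero: "(\<Sum>j<n. e j) = 0"
  shows "(\<Sum>j<n. (e j)\<^sup>2) \<le> real n ^ 2 * (\<Sum>j<n. (e (Suc j) - e j)\<^sup>2)"
proof -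
  define S where "S = (\<Sum>j<n. \<bar>e (Suc j) - e j\<bar>)"
  have oscillation: "\<bar>e i - e l\<bar> \<le> S" if "i < n" "l < n" for i l
  proof -
    have ordered: "\<bar>e q - e p\<bar> \<le> S" if "p \<le> q" "q < n" for p q
    proof -
      have "e q - e p = (\<Sum>j=p..<q. e (Suc j) - e j)" using sum_Suc_diff'[OF that(1), of e] by simp
      then have "\<bar>e q - e p\<bar> \<le> (\<Sum>j=p..<q. \<bar>e (Suc j) - e j\<bar>)" by (simp add: sum_abs)
      also have "\<dots> \<le> S" unfolding S_def using that by (intro sum_mono2) auto
      finally show ?thesis .
    qed
    show ?thesis
      using ordered[of i l] ordered[of l i] that by (metis abs_minus_commute nat_le_linear)
  qed
  have value_bound: "(e i)\<^sup>2 \<le> S\<^sup>2" if "i < n" for i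
  proof -
    have "real n * e i = (\<Sum>l<n. e i - e l)" using mean_zero by (simp add: sum_subtractf)
    then have "real n * \<bar>e i\<bar> = \<bar>\<Sum>l<n. e i - e l\<bar>" by (metis abs_mult abs_of_nat)
    also have "\<dots> \<le> (\<Sum>l<n. \<bar>e i - e l\<bar>)" by (rule sum_abs)
    also have "\<dots> \<le> (\<Sum>l<n. S)" using oscillation that by (intro sum_mono) auto
    also have "\<dots> = real n * S" by simp
    finally have "\<bar>e i\<bar> \<le> S" using n by simp
    then show ?thesis by (metis abs_ge_zero power2_abs power_mono)
  qed
  have "(\<Sum>j<n. (e j)\<^sup>2) \<le> (\<Sum>j<n. S\<^sup>2)" using value_bound by (intro sum_mono) auto
  also have "\<dots> = real n * S\<^sup>2" by simp
  also have "S\<^sup>2 \<le> real n * (\<Sum>j<n. (e (Suc j) - e j)\<^sup>2)"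
    using sum_squared_le_sum_of_squares[of "\<lambda>j. \<bar>e (Suc j) - e j\<bar>" "{..<n}"]
    unfolding S_def by (simp add: mult.commute)
  then have "real n * S\<^sup>2 \<le> real n * (real n * (\<Sum>j<n. (e (Suc j) - e j)\<^sup>2))"
    by (intro mult_left_mono) auto
  finally show ?thesis by (simp add: power2_eq_square)
qed

text \<open>
  Index \<open>m\<close> stands for robot \<open>m mod n + 1\<close> advanced by \<open>m div n\<close> full turns; consecutive
  differences of this lift are the gaps, including the wrap-around gap, and are \<open>n\<close>-periodic.
\<close>
definition unwrapped_phase :: "nat \<Rightarrow> (nat \<Rightarrow> real) \<Rightarrow> nat \<Rightarrow> real" where
  "unwrapped_phase n ph m = ph (m mod n + 1) + 2 * pi * real (m div n)"

definition phase_gap :: "nat \<Rightarrow> (nat \<Rightarrow> real) \<Rightarrow> nat \<Rightarrow> real" where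
  "phase_gap n ph j = unwrapped_phase n ph (Suc j) - unwrapped_phase n ph j"

text \<open>
  The phase velocity of robot \<open>j + 1\<close> in the closed loop, written in terms of its two adjacent
  gaps \<open>d j\<close> and \<open>d (j + n - 1)\<close>; the latter is the preceding gap by \<open>n\<close>-periodicity.
\<close>
definition gap_velocity :: "nat \<Rightarrow> real \<Rightarrow> real \<Rightarrow> (nat \<Rightarrow> real) \<Rightarrow> nat \<Rightarrow> real" where
  "gap_velocity n s k d j = (d j + d (j + n - 1)) / (2 * s) + k * (d j - d (j + n - 1)) / 2"

lemma unwrapped_phase_add_period:
  "n > 0 \<Longrightarrow> unwrapped_phase n ph (m + n) = unwrapped_phase n ph m + 2 * pi"
  by (simp add: unwrapped_phase_def algebra_simps)

lemma phase_gap_periodic: "n > 0 \<Longrightarrow> phase_gap n ph (j + n) = phase_gap n ph j"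
  using unwrapped_phase_add_period[of n ph j] unwrapped_phase_add_period[of n ph "Suc j"]
  by (simp add: phase_gap_def)

lemma sum_phase_gap: "n > 0 \<Longrightarrow> (\<Sum>j<n. phase_gap n ph j) = 2 * pi"
  unfolding phase_gap_def by (simp only: sum_lessThan_telescope) (simp add: unwrapped_phase_def)

lemma phase_gap_below_top: "Suc j < n \<Longrightarrow> phase_gap n ph j = ph (j + 2) - ph (j + 1)"
  by (simp add: phase_gap_def unwrapped_phase_def)

lemma phase_gap_top: "n > 0 \<Longrightarrow> phase_gap n ph (n - 1) = ph 1 + 2 * pi - ph n"
  by (simp add: phase_gap_def unwrapped_phase_def)

lemma gap_velocity_periodic:
  assumes "n > 0" and "\<And>j. d (j + n) = d j"
  shows "gap_velocity n s k d (j + n) = gap_velocity n s k d j"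
proof -
  have "d (j + n + n - 1) = d (j + n - 1)" using assms(2)[of "j + n - 1"] assms(1) by simp
  then show ?thesis using assms(2)[of j] by (simp add: gap_velocity_def)
qed

lemma phase_halfdiff_and_avg_eq_gaps:
  assumes n: "n \<ge> 2" and j: "j < n"
  shows "phase_halfdiff n ph (Suc j) = (phase_gap n ph j + phase_gap n ph (j + n - 1)) / 2
       \<and> phase_avg n ph (Suc j) - ph (Suc j) = (phase_gap n ph j - phase_gap n ph (j + n - 1)) / 2"
proof (cases "j = 0")
  case True
  then show ?thesis using n phase_gap_below_top[of 0 n ph] phase_gap_top[of n ph]
    by (simp add: phase_halfdiff_def phase_avg_def numeral_2_eq_2 field_simps)
next
  case False
  then have previous: "phase_gap n ph (j + n - 1) = ph (j + 1) - ph j"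
    using phase_gap_periodic[of n ph "j - 1"] phase_gap_below_top[of "j - 1" n ph] n j
    by (simp add: algebra_simps)
  show ?thesis
  proof (cases "Suc j = n")
    case True
    then show ?thesis using n False previous phase_gap_top[of n ph]
      by (auto simp: phase_halfdiff_def phase_avg_def numeral_2_eq_2 field_simps)
  next
    case False
    then show ?thesis using n \<open>j \<noteq> 0\<close> j previous phase_gap_below_top[of j n ph]
      by (simp add: phase_halfdiff_def phase_avg_def numeral_2_eq_2 field_simps)
  qed
qed

lemma phase_velocity_eq_gap_velocity:
  assumes "n \<ge> 2" and "j < n"
  shows "phase_halfdiff n ph (Suc j) / s + k * (phase_avg n ph (Suc j) - ph (Suc j))
       = gap_velocity n s k (phase_gap n ph) j"
  using phase_halfdiff_and_avg_eq_gaps[OF assms, of ph] unfolding gap_velocity_def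
  by (simp only:)

lemma phase_gap_has_derivative:
  fixes phi :: "nat \<Rightarrow> real \<Rightarrow> real"
  assumes n: "n > 0" and t: "t \<ge> 0"
    and dphi: "\<And>j t. j < n \<Longrightarrow> t \<ge> 0 \<Longrightarrow>
       (phi (Suc j) has_real_derivative gap_velocity n s k (phase_gap n (\<lambda>i. phi i t)) j)
         (at t within {0..})"
  shows "((\<lambda>t. phase_gap n (\<lambda>i. phi i t) j) has_real_derivative
           gap_velocity n s k (phase_gap n (\<lambda>i. phi i t)) (Suc j)
         - gap_velocity n s k (phase_gap n (\<lambda>i. phi i t)) j) (at t within {0..})"
proof -
  let ?v = "gap_velocity n s k (phase_gap n (\<lambda>i. phi i t))"
  have v_mod: "?v m = ?v (m mod n)" for m
    by (rule periodic_mod[OF n]) (simp add: gap_velocity_periodic n phase_gap_periodic)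
  have "((\<lambda>t. unwrapped_phase n (\<lambda>i. phi i t) m) has_real_derivative ?v m) (at t within {0..})"
    for m
    unfolding unwrapped_phase_def v_mod[of m]
    using dphi[of "m mod n" t] n t by (auto intro!: derivative_eq_intros)
  then show ?thesis unfolding phase_gap_def by (intro derivative_intros)
qed

lemma gap_energy_dissipation:
  assumes n: "n > 0" and periodic: "\<And>j. d (j + n) = d j" and s: "s \<noteq> 0"
  shows "(\<Sum>j<n. (d j - c) * (gap_velocity n s k d (Suc j) - gap_velocity n s k d j))
       = - (k / 2) * (\<Sum>j<n. (d (Suc j) - d j)\<^sup>2)"
proof -
  define T where "T j = (1 / (2 * s) - k / 2) * (d j * d (j + n - 1)) + (k / 2) * (d j)\<^sup>2
                        - c * gap_velocity n s k d j" for j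
  have step: "(d j - c) * (gap_velocity n s k d (Suc j) - gap_velocity n s k d j)
      = - (k / 2) * (d (Suc j) - d j)\<^sup>2 + (T (Suc j) - T j)" for j
    using periodic[of j] s
    by (simp add: T_def gap_velocity_def field_simps power2_eq_square)
  have "n - 1 + n = n + n - 1" using n by simp
  then have "T n = T 0"
    using periodic[of 0] periodic[of "n - 1"] gap_velocity_periodic[of n d s k 0, OF n periodic]
    by (simp add: T_def)
  then have "(\<Sum>j<n. T (Suc j) - T j) = 0" by (simp only: sum_lessThan_telescope)
  moreover have "(\<Sum>j<n. (d j - c) * (gap_velocity n s k d (Suc j) - gap_velocity n s k d j))
      = (\<Sum>j<n. - (k / 2) * (d (Suc j) - d j)\<^sup>2) + (\<Sum>j<n. T (Suc j) - T j)"
    by (simp only: step sum.distrib)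
  ultimately show ?thesis by (simp add: sum_distrib_left)
qed

lemma exp_conv_gap_consensus:
  fixes d :: "real \<Rightarrow> nat \<Rightarrow> real"
  assumes n: "n > 0" and s: "s > 0" and k: "k > 0"
    and periodic: "\<And>t j. d t (j + n) = d t j"
    and sum: "\<And>t. (\<Sum>j<n. d t j) = real n * c"
    and deriv: "\<And>t j. t \<ge> 0 \<Longrightarrow> ((\<lambda>t. d t j) has_real_derivative
                  gap_velocity n s k (d t) (Suc j) - gap_velocity n s k (d t) j) (at t within {0..})"
  shows "exp_conv (\<lambda>t. d t j) c"
proof -
  define V where "V t = (\<Sum>j<n. (d t j - c)\<^sup>2)" for t
  define a where "a = k / real n ^ 2"
  have dV: "(V has_real_derivative - k * (\<Sum>j<n. (d t (Suc j) - d t j)\<^sup>2)) (at t within {0..})"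
    if "t \<ge> 0" for t
  proof -
    have "(V has_real_derivative
            (\<Sum>j<n. 2 * (d t j - c) * (gap_velocity n s k (d t) (Suc j) - gap_velocity n s k (d t) j)))
          (at t within {0..})"
      unfolding V_def by (rule DERIV_sum) (auto intro!: derivative_eq_intros deriv[OF that])
    moreover have "(\<Sum>j<n. 2 * (d t j - c) * (gap_velocity n s k (d t) (Suc j) - gap_velocity n s k (d t) j))
        = 2 * (\<Sum>j<n. (d t j - c) * (gap_velocity n s k (d t) (Suc j) - gap_velocity n s k (d t) j))"
      by (simp only: sum_distrib_left mult.assoc)
    also have "\<dots> = - k * (\<Sum>j<n. (d t (Suc j) - d t j)\<^sup>2)"
      using gap_energy_dissipation[of n "d t" s c k] n periodic s by simp
    ultimately show ?thesis by simp
  qed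
  have dissipation: "- k * (\<Sum>j<n. (d t (Suc j) - d t j)\<^sup>2) \<le> - a * V t" for t
  proof -
    have "(\<Sum>j<n. d t j - c) = 0" using sum[of t] n by (simp add: sum_subtractf)
    from discrete_poincare_inequality[OF n this]
    have "V t \<le> real n ^ 2 * (\<Sum>j<n. (d t (Suc j) - d t j)\<^sup>2)" by (simp add: V_def)
    then have "a * V t \<le> a * (real n ^ 2 * (\<Sum>j<n. (d t (Suc j) - d t j)\<^sup>2))"
      using k by (intro mult_left_mono) (auto simp: a_def)
    then show ?thesis using n by (simp add: a_def)
  qed
  have "exp_conv (\<lambda>t. d t (j mod n)) c"
  proof (rule exp_conv_if_square_bound)
    show "a > 0" using n k by (simp add: a_def)
    fix t :: real assume "t \<ge> 0"
    have "(d t (j mod n) - c)\<^sup>2 \<le> V t"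
      unfolding V_def using n by (intro member_le_sum) auto
    also have "\<dots> \<le> V 0 * exp (- a * t)"
      by (rule DERIV_le_neg_mult_imp_exp_bound[OF dV dissipation \<open>t \<ge> 0\<close>])
    finally show "(d t (j mod n) - c)\<^sup>2 \<le> V 0 * exp (- a * t)" .
  qed
  moreover have "d t j = d t (j mod n)" for t by (rule periodic_mod[of n "d t", OF n periodic])
  ultimately show ?thesis by simp
qed

theorem proposition2:
  fixes n :: nat and rho_star s k_rho k_z k_phi :: real
    and rho phi z :: "nat \<Rightarrow> real \<Rightarrow> real"
  assumes "n \<ge> 2" and "rho_star \<ge> 0" and "s > 0"
    and "k_rho > 0" and "k_z > 0" and "k_phi > 0"
    and order0: "\<forall>i. 1 \<le> i \<and> i < n \<longrightarrow> phi i 0 \<le> phi (i + 1) 0"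
    and order0': "phi n 0 \<le> phi 1 0 + 2 * pi"
    and drho: "\<And>i t. 1 \<le> i \<Longrightarrow> i \<le> n \<Longrightarrow> t \<ge> 0 \<Longrightarrow>
       ((rho i) has_real_derivative (k_rho * (rho_star - rho i t))) (at t within {0..})"
    and dphi: "\<And>i t. 1 \<le> i \<Longrightarrow> i \<le> n \<Longrightarrow> t \<ge> 0 \<Longrightarrow>
       ((phi i) has_real_derivative
          (phase_halfdiff n (\<lambda>j. phi j t) i / s
           + k_phi * (phase_avg n (\<lambda>j. phi j t) i - phi i t))) (at t within {0..})"
    and dz: "\<And>i t. 1 \<le> i \<Longrightarrow> i \<le> n \<Longrightarrow> t \<ge> 0 \<Longrightarrow>
       ((z i) has_real_derivative (- k_z * z i t)) (at t within {0..})"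
  shows "\<forall>i. 1 \<le> i \<and> i \<le> n \<longrightarrow>
           exp_conv (rho i) rho_star
         \<and> exp_conv (\<lambda>t. phi i t - phase_avg n (\<lambda>j. phi j t) i) 0
         \<and> exp_conv (\<lambda>t. phase_halfdiff n (\<lambda>j. phi j t) i / s
                         + k_phi * (phase_avg n (\<lambda>j. phi j t) i - phi i t)) (2 * pi / (real n * s))
         \<and> exp_conv (z i) 0"
proof (intro allI impI conjI)
  have n: "n > 0" using \<open>n \<ge> 2\<close> by simp
  define d where "d t = phase_gap n (\<lambda>i. phi i t)" for t
  define c where "c = 2 * pi / real n"
  have dphi_gap: "(phi (Suc j) has_real_derivative gap_velocity n s k_phi (phase_gap n (\<lambda>i. phi i t)) j)
      (at t within {0..})" if "j < n" "t \<ge> 0" for j t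
    using dphi[of "Suc j" t] that
      phase_velocity_eq_gap_velocity[OF \<open>n \<ge> 2\<close> \<open>j < n\<close>, of "\<lambda>i. phi i t" s k_phi] by simp
  have gaps: "exp_conv (\<lambda>t. d t j) c" for j
  proof (rule exp_conv_gap_consensus[OF n \<open>s > 0\<close> \<open>k_phi > 0\<close>])
    show "d t (j + n) = d t j" for t j by (simp add: d_def phase_gap_periodic n)
    show "(\<Sum>j<n. d t j) = real n * c" for t using n by (simp add: d_def c_def sum_phase_gap)
    show "((\<lambda>t. d t j) has_real_derivative
        gap_velocity n s k_phi (d t) (Suc j) - gap_velocity n s k_phi (d t) j) (at t within {0..})"
      if "t \<ge> 0" for t j
      unfolding d_def by (rule phase_gap_has_derivative[OF n that dphi_gap])
  qed
  fix i assume i_range: "1 \<le> i \<and> i \<le> n"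
  then obtain j where i: "i = Suc j" and "j < n" by (cases i) auto
  show "exp_conv (rho i) rho_star"
  proof (rule exp_conv_linear_ode[OF _ \<open>k_rho > 0\<close>])
    show "(rho i has_real_derivative - k_rho * (rho i t - rho_star)) (at t within {0..})"
      if "t \<ge> 0" for t
      using drho[of i t] i_range that by (simp add: algebra_simps)
  qed
  show "exp_conv (z i) 0"
    using dz[of i] i_range \<open>k_z > 0\<close> by (intro exp_conv_linear_ode) simp
  note local = phase_halfdiff_and_avg_eq_gaps[OF \<open>n \<ge> 2\<close> \<open>j < n\<close>]
  have "exp_conv (\<lambda>t. (- 1 / 2) * d t j + (1 / 2) * d t (j + n - 1)) ((- 1 / 2) * c + (1 / 2) * c)"
    by (intro exp_conv_lincomb gaps)
  moreover have "phi i t - phase_avg n (\<lambda>j. phi j t) i = (- 1 / 2) * d t j + (1 / 2) * d t (j + n - 1)"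
    for t using local[of "\<lambda>j. phi j t"] by (simp add: i d_def)
  ultimately show "exp_conv (\<lambda>t. phi i t - phase_avg n (\<lambda>j. phi j t) i) 0" by simp
  have "exp_conv (\<lambda>t. (1 / (2 * s) + k_phi / 2) * d t j + (1 / (2 * s) - k_phi / 2) * d t (j + n - 1))
          ((1 / (2 * s) + k_phi / 2) * c + (1 / (2 * s) - k_phi / 2) * c)"
    by (intro exp_conv_lincomb gaps)
  moreover have "phase_halfdiff n (\<lambda>j. phi j t) i / s + k_phi * (phase_avg n (\<lambda>j. phi j t) i - phi i t)
      = (1 / (2 * s) + k_phi / 2) * d t j + (1 / (2 * s) - k_phi / 2) * d t (j + n - 1)" for t
    using phase_velocity_eq_gap_velocity[OF \<open>n \<ge> 2\<close> \<open>j < n\<close>]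
    by (simp add: i d_def gap_velocity_def algebra_simps add_divide_distrib diff_divide_distrib)
  moreover have "(1 / (2 * s) + k_phi / 2) * c + (1 / (2 * s) - k_phi / 2) * c = 2 * pi / (real n * s)"
    using n \<open>s > 0\<close> by (simp add: c_def field_simps)
  ultimately show "exp_conv (\<lambda>t. phase_halfdiff n (\<lambda>j. phi j t) i / s
                  + k_phi * (phase_avg n (\<lambda>j. phi j t) i - phi i t)) (2 * pi / (real n * s))"
    by simp
qed

end
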